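(* Let $M,H,\overline N\in\mathbb{N}$ with $\overline N\ge H\ge M\ge1$, and let $N(k):=\overline N-(k\bmod M)$ for $k\in\mathbb{N}_0$. Let $\bar k\in\mathbb{N}_0$ and let $(\bar\gamma(k))_{k=0}^{\bar k-1}\subseteq\{0,1\}$ with $\bar\gamma(0)=1$, and define $s(0):=0$, $s(k+1):=0$ if $\bar\gamma(k)=1$ and $s(k+1):=s(k)+1$ if $\bar\gamma(k)=0$. Suppose that for every $k\in\{0,\dots,\bar k-1\}$ there is a schedule $\sigma_k\in\Gamma^H_{N(k)}(s(k))$ with $\sigma_k(0)=\bar\gamma(k)$. Then for every $k\in\{0,\dots,\bar k-H\}$ it holds that $\sum_{i=k}^{k+H-1}\bar\gamma(i)\ge1$.
   Context: For $N,H\in\mathbb{N}$ and $s\in\mathbb{N}_0$, $\Gamma^H_N(s)$ denotes the set of schedules $\sigma=(\sigma(0),\dots,\sigma(N-1))\in\{0,1\}^N$ such that either $N\le H-s-1$, or $\sigma$ contains at least one entry equal to $1$ and, writing $\tau_0<\tau_1<\dots<\tau_{n-1}$ for the indices $j$ with $\sigma(j)=1$, it holds that $\tau_0\le H-s-1$, $\tau_{j+1}-\tau_j\le H$ for all $j\in\{0,\dots,n-2\}$, and $N-\tau_{n-1}\le H-1$. *)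

theory Defs
  imports Main
begin

text \<open>Quantities H - s - 1 and H - 1 are
  compared in the integers (they may be negative).\<close>

definition sched_ones :: "nat list \<Rightarrow> nat list" where
  "sched_ones \<sigma> = filter (\<lambda>j. \<sigma> ! j = 1) [0..<length \<sigma>]"

definition Gamma :: "nat \<Rightarrow> nat \<Rightarrow> nat \<Rightarrow> nat list set" where
  "Gamma H N s = {\<sigma>. length \<sigma> = N \<and> set \<sigma> \<subseteq> {0, 1} \<and>
     (int N \<le> int H - int s - 1 \<or>
      (let \<tau> = sched_ones \<sigma> in
         \<tau> \<noteq> [] \<and>
         int (\<tau> ! 0) \<le> int H - int s - 1 \<and>
         (\<forall>j. j + 1 < length \<tau> \<longrightarrow> \<tau> ! (j + 1) - \<tau> ! j \<le> H) \<and>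
         int N - int (\<tau> ! (length \<tau> - 1)) \<le> int H - 1))}"

fun s_cnt :: "(nat \<Rightarrow> nat) \<Rightarrow> nat \<Rightarrow> nat" where
  "s_cnt \<gamma> 0 = 0"
| "s_cnt \<gamma> (Suc k) = (if \<gamma> k = 1 then 0 else s_cnt \<gamma> k + 1)"

end

theory Submission
  imports Defs
begin

text \<open>If the window \<open>\<gamma>(k), \<dots>, \<gamma>(k+H-1)\<close> were all zero, the counter would reach
  \<open>s(k+H-1) \<ge> H-1\<close>. But a feasible schedule starting with \<open>0\<close> must place its first \<open>1\<close>
  at some index \<open>\<tau>\<^sub>0 \<ge> 1\<close> with \<open>\<tau>\<^sub>0 \<le> H - s - 1\<close> (or be shorter than \<open>H - s - 1\<close>, which
  is at least 1 as the horizon \<open>N(k) \<ge> \<overline>N - M + 1\<close> is positive), so \<open>s \<le> H - 2\<close>.\<close>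

lemma s_cnt_ge_run_length:
  assumes "\<forall>i<j. \<gamma> (k + i) \<noteq> 1"
  shows "j \<le> s_cnt \<gamma> (k + j)"
  using assms by (induction j) auto

lemma sched_ones_nth_eq_one:
  assumes "j \<in> set (sched_ones \<sigma>)"
  shows "\<sigma> ! j = 1"
  using assms unfolding sched_ones_def by simp

lemma Gamma_head_zero_imp_counter_bound:
  assumes \<sigma>: "\<sigma> \<in> Gamma H N s" and head: "\<sigma> ! 0 = 0" and "1 \<le> N"
  shows "s + 2 \<le> H"
proof (cases "int N \<le> int H - int s - 1")
  case True
  with \<open>1 \<le> N\<close> show ?thesis by linarith
next
  case False
  with \<sigma> have ne: "sched_ones \<sigma> \<noteq> []"
    and first: "int (sched_ones \<sigma> ! 0) \<le> int H - int s - 1"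
    unfolding Gamma_def by (auto simp: Let_def)
  from ne have "\<sigma> ! (sched_ones \<sigma> ! 0) = 1"
    by (intro sched_ones_nth_eq_one) simp
  with head have "sched_ones \<sigma> ! 0 \<noteq> 0"
    by (metis zero_neq_one)
  with first show ?thesis by linarith
qed

theorem lemma6:
  fixes M H Nbar kbar :: nat and \<gamma> :: "nat \<Rightarrow> nat"
  assumes "1 \<le> M" and "M \<le> H" and "H \<le> Nbar"
    and "\<forall>k < kbar. \<gamma> k \<in> {0, 1}"
    and "\<gamma> 0 = 1"
    and "\<forall>k < kbar. \<exists>\<sigma> \<in> Gamma H (Nbar - k mod M) (s_cnt \<gamma> k). \<sigma> ! 0 = \<gamma> k"
  shows "\<forall>k. k + H \<le> kbar \<longrightarrow> (\<Sum>i = k..<k + H. \<gamma> i) \<ge> 1"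
proof (intro allI impI)
  fix k assume window: "k + H \<le> kbar"
  show "(\<Sum>i = k..<k + H. \<gamma> i) \<ge> 1"
  proof (rule ccontr)
    assume "\<not> ?thesis"
    then have "(\<Sum>i = k..<k + H. \<gamma> i) = 0" by linarith
    then have zeros: "\<forall>i\<in>{k..<k + H}. \<gamma> i = 0" by simp
    define m where "m = k + (H - 1)"
    have "m < kbar" "\<gamma> m = 0"
      unfolding m_def using window zeros assms(1,2) by auto
    obtain \<sigma> where \<sigma>: "\<sigma> \<in> Gamma H (Nbar - m mod M) (s_cnt \<gamma> m)" "\<sigma> ! 0 = \<gamma> m"
      using assms(6) \<open>m < kbar\<close> by blast
    have "H - 1 \<le> s_cnt \<gamma> m"
      unfolding m_def using zeros by (intro s_cnt_ge_run_length) auto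
    moreover have "m mod M < M" using assms(1) by simp
    then have "s_cnt \<gamma> m + 2 \<le> H"
      using \<sigma> \<open>\<gamma> m = 0\<close> assms(2,3)
      by (intro Gamma_head_zero_imp_counter_bound[OF \<sigma>(1)]) auto
    ultimately show False by linarith
  qed
qed

end
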